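(* Assume: - the strengthened triangle inequality under the square holds with constant $a_0$; - the forms $\overline a_{l,i}$ provide a positive semi-definite splitting with constant $b_0$; - the subspaces are locally stable with constant $C_1$; - the subspaces admit a level-wise coloring with $k_0$ colors. Then the operator $\mathcal P$ of parallel multilevel subspace correction satisfies $$\kappa_2(\mathcal P)\le C^L\Bigl(1+\frac{b_0C_1}{C-1}\Bigr)(1+k_0L),\qquad C=2(1+a_0b_0C_1).$$
   Context: Let $V_h$ be a finite-dimensional real vector space with a symmetric positive definite bilinear form $a_h$, and $\|v\|_{a_h}=\sqrt{a_h(v,v)}$. Let $L\ge1$ and let $V_{h,0}\subseteq V_{h,1}\subseteq\cdots\subseteq V_{h,L}=V_h$ be nested subspaces. For each level $1\le l\le L$ let $P_l\in\mathbb N$ and let $V_{h,l,i}\subseteq V_{h,l}$, $i=1,\dots,P_l$, be subspaces. For each such $(l,i)$ let $\overline V_{h,l,i}$ be a finite-dimensional real vector space, $r_{l,i}:V_{h,l}\to\overline V_{h,l,i}$ a linear map, and $\overline a_{l,i}$ a symmetric positive semi-definite bilinear form on $\overline V_{h,l,i}$ with seminorm $|w|_{\overline a_{l,i}}=\sqrt{\overline a_{l,i}(w,w)}$. Let $\mathcal P_0:V_h\to V_{h,0}$ and $\mathcal P_{l,i}:V_h\to V_{h,l,i}$ be the $a_h$-orthogonal projections. Set $\mathcal P=\mathcal P_0+\sum_{l=1}^L\sum_{i=1}^{P_l}\mathcal P_{l,i}$ and $\kappa_2(\mathcal P)=\lambda_{\max}(\mathcal P)/\lambda_{\min}(\mathcal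 P)$. Strengthened triangle inequality under the square with constant $a_0>0$: for every $l$ and every choice of $v_{l,i}\in V_{h,l,i}$, $$\Bigl\|\sum_{i}v_{l,i}\Bigr\|_{a_h}^2\le a_0\sum_i\|v_{l,i}\|_{a_h}^2.$$ Positive semi-definite splitting with constant $b_0>0$: for every $l$ and all $v_l\in V_{h,l}$, $$\sum_{i}|r_{l,i}v_l|_{\overline a_{l,i}}^2\le b_0\|v_l\|_{a_h}^2.$$ Local stability with constant $C_1>0$: for every $1\le l\le L$ and every $v_l\in V_{h,l}$ there is a decomposition $v_l=v_{l-1}+\sum_{i}v_{l,i}$ with $v_{l-1}\in V_{h,l-1}$ and $v_{l,i}\in V_{h,l,i}$ such that $\|v_{l,i}\|_{a_h}^2\le C_1|r_{l,i}v_l|_{\overline a_{l,i}}^2$ for all $i$. Level-wise coloring with $k_0$ colors: for each $l$ there is a map $c_l:\{1,\dots,P_l\}\to\{1,\dots,k_0\}$ such that $i\ne j$ and $c_l(i)=c_l(j)$ imply $a_h(v_i,v_j)=0$ for all $v_i\in V_{h,l,i}$ and $v_j\in V_{h,l,j}$. All constants are independent of $l$. *)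

theory Defs
  imports "HOL-Analysis.Analysis"
begin

definition a_proj :: "('v::real_vector \<Rightarrow> 'v \<Rightarrow> real) \<Rightarrow> 'v set \<Rightarrow> 'v \<Rightarrow> 'v" where
  "a_proj a U v = (THE u. u \<in> U \<and> (\<forall>w\<in>U. a (v - u) w = 0))"

definition eigvals :: "('v::real_vector \<Rightarrow> 'v) \<Rightarrow> real set" where
  "eigvals f = {t. \<exists>v. v \<noteq> 0 \<and> f v = t *\<^sub>R v}"

definition lambda_max :: "('v::real_vector \<Rightarrow> 'v) \<Rightarrow> real" where
  "lambda_max f = Max (eigvals f)"

definition lambda_min :: "('v::real_vector \<Rightarrow> 'v) \<Rightarrow> real" where
  "lambda_min f = Min (eigvals f)"

definition kappa2 :: "('v::real_vector \<Rightarrow> 'v) \<Rightarrow> real" where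
  "kappa2 f = lambda_max f / lambda_min f"

end

theory Submission
  imports Defs
begin

text \<open>Each eigenvalue t of the additive Schwarz operator satisfies
  t a(v,v) = sum_j a(p_j v, p_j v). The coloring bounds this sum above by
  (1 + k0 L) a(v,v), because projections onto mutually a-orthogonal spaces have
  energies summing to at most a(v,v). A stable decomposition v = sum_j x_j with
  sum_j a(x_j,x_j) <= K a(v,v) bounds it below by a(v,v)/K (Lions' lemma). Such a
  decomposition is built level by level: local stability and the semi-definite
  splitting give a level-l correction of energy at most b0 C1 a(v,v), the strengthened
  triangle inequality then bounds the coarser remainder by C a(v,v), and the
  recursion K_l = C K_(l-1) + b0 C1 sums to a geometric series.\<close>

lemma kappa2_le_of_eigvals_bounds:
  assumes bounds: "\<And>t. t \<in> eigvals f \<Longrightarrow> m \<le> t \<and> t \<le> M" and "0 < m" "m \<le> M"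
  shows "kappa2 f \<le> M / m"
proof (cases "finite (eigvals f) \<and> eigvals f \<noteq> {}")
  case True
  then have "Max (eigvals f) \<le> M" "m \<le> Min (eigvals f)"
    using bounds by auto
  with \<open>0 < m\<close> \<open>m \<le> M\<close> show ?thesis
    unfolding kappa2_def lambda_max_def lambda_min_def by (intro frac_le) auto
next
  case False
  \<comment> \<open>Max and Min of an empty or infinite set are the same junk value.\<close>
  then have "Max (eigvals f) = Min (eigvals f)"
    unfolding Max.eq_fold' Min.eq_fold' by auto
  then have "kappa2 f \<le> 1"
    unfolding kappa2_def lambda_max_def lambda_min_def by simp
  also have "1 \<le> M / m" using assms by simp
  finally show ?thesis .
qed

lemma geometric_bound_le:
  fixes C D :: real
  assumes "1 < C" "0 \<le> D"
  shows "C ^ n + D * (\<Sum>k<n. C ^ k) \<le> C ^ n * (1 + D / (C - 1))"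
proof -
  have "D * (\<Sum>k<n. C ^ k) = D * (C ^ n - 1) / (C - 1)"
    using assms by (simp add: geometric_sum)
  also have "\<dots> \<le> D * C ^ n / (C - 1)"
    using assms by (intro divide_right_mono mult_left_mono) auto
  finally show ?thesis by (simp add: algebra_simps)
qed

lemma sum_insert_Sigma:
  fixes g :: "nat \<times> nat \<Rightarrow> 'a::comm_monoid_add"
  shows "(\<Sum>j\<in>insert (0, 0) (SIGMA l:{1..L}. {1..P l}). g j)
     = g (0, 0) + (\<Sum>l\<in>{1..L}. \<Sum>i\<in>{1..P l}. g (l, i))"
proof -
  have "(0, 0) \<notin> (SIGMA l:{1..L}. {1..P l})" by auto
  then show ?thesis
    by (simp add: sum.Sigma split_def)
qed

locale spd_form =
  fixes a :: "'v::euclidean_space \<Rightarrow> 'v \<Rightarrow> real"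
  assumes bilinear_a: "bilinear a" and a_sym: "\<And>u v. a u v = a v u"
    and a_pos: "\<And>v. v \<noteq> 0 \<Longrightarrow> a v v > 0"
begin

lemma a_nonneg: "0 \<le> a v v"
  using a_pos[of v] bilinear_lzero[OF bilinear_a] by (cases "v = 0") auto

lemma a_add_left: "a (x + y) z = a x z + a y z"
  by (rule bilinear_ladd[OF bilinear_a])

lemma a_add_right: "a x (y + z) = a x y + a x z"
  by (rule bilinear_radd[OF bilinear_a])

lemma a_diff_left: "a (x - y) z = a x z - a y z"
  by (rule bilinear_lsub[OF bilinear_a])

lemma a_diff_right: "a z (x - y) = a z x - a z y"
  by (rule bilinear_rsub[OF bilinear_a])

lemma a_scale_left: "a (c *\<^sub>R x) y = c * a x y"
  using bilinear_lmul[OF bilinear_a] by simp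

lemma a_scale_right: "a x (c *\<^sub>R y) = c * a x y"
  using bilinear_rmul[OF bilinear_a] by simp

lemma a_zero_right: "a x 0 = 0"
  using bilinear_rzero[OF bilinear_a] by simp

lemma a_sum_left: "a (sum f S) y = (\<Sum>i\<in>S. a (f i) y)"
proof -
  interpret linear "\<lambda>x. a x y" using bilinear_a by (simp add: bilinear_def)
  show ?thesis by (simp add: sum)
qed

lemma a_sum_right: "a y (sum f S) = (\<Sum>i\<in>S. a y (f i))"
proof -
  interpret linear "\<lambda>x. a y x" using bilinear_a by (simp add: bilinear_def)
  show ?thesis by (simp add: sum)
qed

lemma a_orthogonal_span:
  assumes "\<forall>w\<in>S. a z w = 0" and "w \<in> span S"
  shows "a z w = 0"
proof -
  have "subspace {w. a z w = 0}"
    by (auto simp: subspace_def a_zero_right a_add_right a_scale_right)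
  then show ?thesis
    using span_induct[OF assms(2), of "\<lambda>w. a z w = 0"] assms(1) by auto
qed

lemma a_orthogonal_insert:
  assumes p: "p \<in> span S" "\<And>w. w \<in> span S \<Longrightarrow> a (v - p) w = 0"
    and y: "y = x - q" "q \<in> span S" "\<And>w. w \<in> span S \<Longrightarrow> a y w = 0" "y \<noteq> 0"
  defines "u \<equiv> p + (a v y / a y y) *\<^sub>R y"
  shows "u \<in> span (insert x S) \<and> (\<forall>w\<in>span (insert x S). a (v - u) w = 0)"
proof
  have "a y y > 0" using a_pos y(4) by auto
  have "y \<in> span (insert x S)"
    using y(1,2) by (metis span_base span_diff span_mono insertI1 subset_insertI subsetD)
  then show "u \<in> span (insert x S)"
    unfolding u_def by (meson p(1) span_add span_scale span_mono subset_insertI subsetD)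
  have on_S: "a (v - u) w = 0" if "w \<in> span S" for w
    using p(2)[OF that] y(3)[OF that]
    by (simp add: u_def a_diff_left a_add_left a_scale_left algebra_simps
        diff_diff_eq[symmetric] del: diff_diff_eq)
  have "a (v - u) y = a (v - p) y - a v y"
    using \<open>a y y > 0\<close> by (simp add: u_def a_diff_left a_add_left a_scale_left)
  also have "a (v - p) y = a v y"
    using y(3)[OF p(1)] by (simp add: a_diff_left a_sym[of p])
  finally have "a (v - u) y = 0" by simp
  moreover have "x = q + y" using y(1) by simp
  ultimately have "a (v - u) x = 0"
    using on_S[OF y(2)] by (metis a_add_right add_0)
  then have "\<forall>w\<in>insert x S. a (v - u) w = 0"
    using on_S span_base by auto
  then show "\<forall>w\<in>span (insert x S). a (v - u) w = 0"
    using a_orthogonal_span by blast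
qed

text \<open>Gram-Schmidt with respect to a: adjoin one spanning vector at a time.\<close>
lemma a_proj_exists_span:
  assumes "finite S"
  shows "\<exists>u\<in>span S. \<forall>w\<in>span S. a (v - u) w = 0"
  using assms
proof (induction S arbitrary: v rule: finite_induct)
  case empty
  then show ?case by (auto simp: a_zero_right)
next
  case (insert x S)
  obtain p where p: "p \<in> span S" "\<And>w. w \<in> span S \<Longrightarrow> a (v - p) w = 0"
    using insert.IH by blast
  obtain q where q: "q \<in> span S" "\<And>w. w \<in> span S \<Longrightarrow> a (x - q) w = 0"
    using insert.IH by blast
  show ?case
  proof (cases "x - q = 0")
    case True
    then have "span (insert x S) = span S"
      using q(1) by (simp add: span_redundant)
    then show ?thesis using p by auto
  next
    case False
    then show ?thesis
      using a_orthogonal_insert[OF p refl q(1) q(2) False] by blast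
  qed
qed

lemma a_proj:
  assumes "subspace U"
  shows "a_proj a U v \<in> U" and "\<And>w. w \<in> U \<Longrightarrow> a (v - a_proj a U v) w = 0"
proof -
  obtain B where B: "finite B" "span B = U"
    by (metis assms basis_exists finiteI_independent span_subspace)
  obtain u where u: "u \<in> U" "\<forall>w\<in>U. a (v - u) w = 0"
    using a_proj_exists_span[OF B(1)] B(2) by blast
  have "u' = u" if "u' \<in> U" "\<forall>w\<in>U. a (v - u') w = 0" for u'
  proof (rule ccontr)
    assume "u' \<noteq> u"
    have "u - u' \<in> U" using that(1) u(1) assms subspace_diff by blast
    then have "a (u - u') (u - u') = 0"
      using that(2) u(2) a_diff_left[of "v - u'" "v - u"] by simp
    with \<open>u' \<noteq> u\<close> show False using a_pos[of "u - u'"] by simp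
  qed
  with u have "\<exists>!u. u \<in> U \<and> (\<forall>w\<in>U. a (v - u) w = 0)" by blast
  from theI'[OF this] show "a_proj a U v \<in> U" "\<And>w. w \<in> U \<Longrightarrow> a (v - a_proj a U v) w = 0"
    unfolding a_proj_def by blast+
qed

lemma a_proj_self:
  assumes "subspace U"
  shows "a (a_proj a U v) v = a (a_proj a U v) (a_proj a U v)"
proof -
  have "a (v - a_proj a U v) (a_proj a U v) = 0"
    using a_proj[OF assms] by blast
  then show ?thesis by (simp add: a_diff_left a_sym[of v])
qed

lemma a_diff_le: "a (x - y) (x - y) \<le> 2 * a x x + 2 * a y y"
proof -
  have "a (x - y) (x - y) + a (x + y) (x + y) = 2 * a x x + 2 * a y y"
    by (simp add: a_diff_left a_diff_right a_add_left a_add_right a_sym[of y x])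
  then show ?thesis using a_nonneg[of "x + y"] by simp
qed

lemma two_mult_a_le: "2 * e * a x y \<le> e\<^sup>2 * a x x + a y y"
proof -
  have "0 \<le> a (e *\<^sub>R x - y) (e *\<^sub>R x - y)" by (rule a_nonneg)
  also have "\<dots> = e\<^sup>2 * a x x - 2 * e * a x y + a y y"
    by (simp add: a_diff_left a_diff_right a_scale_left a_scale_right a_sym[of y x]
        power2_eq_square algebra_simps)
  finally show ?thesis by simp
qed


lemma sum_a_orthogonal_le:
  assumes "finite J" and orth: "\<And>i j. i \<in> J \<Longrightarrow> j \<in> J \<Longrightarrow> i \<noteq> j \<Longrightarrow> a (p i) (p j) = 0"
    and proj: "\<And>i. i \<in> J \<Longrightarrow> a (p i) v = a (p i) (p i)"
  shows "(\<Sum>i\<in>J. a (p i) (p i)) \<le> a v v"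
proof -
  define W where "W = (\<Sum>i\<in>J. p i)"
  have "a W W = (\<Sum>i\<in>J. a (p i) W)"
    by (simp add: W_def a_sum_left)
  also have "\<dots> = (\<Sum>i\<in>J. \<Sum>j\<in>J. a (p i) (p j))"
    by (simp add: W_def a_sum_right)
  also have "\<dots> = (\<Sum>i\<in>J. \<Sum>j\<in>J. if j = i then a (p i) (p i) else 0)"
    using orth by (intro sum.cong refl) auto
  also have "\<dots> = (\<Sum>i\<in>J. a (p i) (p i))"
    using \<open>finite J\<close> by simp
  finally have "a W W = (\<Sum>i\<in>J. a (p i) (p i))" .
  moreover have "a W v = (\<Sum>i\<in>J. a (p i) (p i))"
    by (simp add: W_def a_sum_left proj)
  moreover have "0 \<le> a (v - W) (v - W)" by (rule a_nonneg)
  ultimately show ?thesis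
    by (simp add: a_diff_left a_diff_right a_sym[of v W])
qed

lemma sum_a_colored_le:
  assumes "finite I" and color: "\<And>i. i \<in> I \<Longrightarrow> c i \<in> {1..k}"
    and orth: "\<And>i j. i \<in> I \<Longrightarrow> j \<in> I \<Longrightarrow> i \<noteq> j \<Longrightarrow> c i = c j \<Longrightarrow> a (p i) (p j) = 0"
    and proj: "\<And>i. i \<in> I \<Longrightarrow> a (p i) v = a (p i) (p i)"
  shows "(\<Sum>i\<in>I. a (p i) (p i)) \<le> real k * a v v"
proof -
  have "(\<Sum>i\<in>I. a (p i) (p i)) = (\<Sum>col\<in>c ` I. \<Sum>i\<in>{i\<in>I. c i = col}. a (p i) (p i))"
    by (rule sum.image_gen[OF \<open>finite I\<close>])
  also have "\<dots> \<le> (\<Sum>col\<in>c ` I. a v v)"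
    using assms by (intro sum_mono sum_a_orthogonal_le) auto
  also have "\<dots> = real (card (c ` I)) * a v v" by simp
  also have "\<dots> \<le> real k * a v v"
  proof -
    have "card (c ` I) \<le> k"
      using card_mono[of "{1..k}" "c ` I"] color by fastforce
    then show ?thesis by (intro mult_right_mono) (auto simp: a_nonneg)
  qed
  finally show ?thesis .
qed

lemma energy_le_of_stable_decomposition:
  assumes "finite J" and x: "\<And>j. j \<in> J \<Longrightarrow> x j \<in> U j"
    and orth: "\<And>j w. j \<in> J \<Longrightarrow> w \<in> U j \<Longrightarrow> a (v - p j) w = 0"
    and decomp: "v = (\<Sum>j\<in>J. x j)"
    and stable: "(\<Sum>j\<in>J. a (x j) (x j)) \<le> K * a v v" and "0 < K"
  shows "a v v \<le> K * (\<Sum>j\<in>J. a (p j) (p j))"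
proof -
  have "a v v = (\<Sum>j\<in>J. a (x j) v)"
    by (subst (1) decomp) (simp add: a_sum_left)
  also have "\<dots> = (\<Sum>j\<in>J. a (x j) (p j))"
    using orth x by (intro sum.cong refl) (simp add: a_diff_left a_sym[of "x _"])
  finally have "2 / K * a v v = (\<Sum>j\<in>J. 2 * (1 / K) * a (x j) (p j))"
    by (simp add: sum_distrib_left)
  also have "\<dots> \<le> (\<Sum>j\<in>J. (1 / K)\<^sup>2 * a (x j) (x j) + a (p j) (p j))"
    by (intro sum_mono two_mult_a_le)
  also have "\<dots> = (1 / K)\<^sup>2 * (\<Sum>j\<in>J. a (x j) (x j)) + (\<Sum>j\<in>J. a (p j) (p j))"
    by (simp add: sum.distrib sum_distrib_left)
  also have "\<dots> \<le> (1 / K)\<^sup>2 * (K * a v v) + (\<Sum>j\<in>J. a (p j) (p j))"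
    using stable by (intro add_right_mono mult_left_mono) simp_all
  finally show ?thesis
    using \<open>0 < K\<close> by (simp add: power2_eq_square field_simps)
qed

lemma kappa2_additive_schwarz_le:
  assumes "finite J" and U: "\<And>j. j \<in> J \<Longrightarrow> subspace (U j)" and "0 < K"
    and stable: "\<And>v. \<exists>x. (\<forall>j\<in>J. x j \<in> U j) \<and> v = (\<Sum>j\<in>J. x j)
                       \<and> (\<Sum>j\<in>J. a (x j) (x j)) \<le> K * a v v"
    and bounded: "\<And>v. (\<Sum>j\<in>J. a (a_proj a (U j) v) (a_proj a (U j) v)) \<le> M * a v v"
  shows "kappa2 (\<lambda>v. \<Sum>j\<in>J. a_proj a (U j) v) \<le> M * K"
proof -
  define Q where "Q v = (\<Sum>j\<in>J. a (a_proj a (U j) v) (a_proj a (U j) v))" for v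
  have lower: "a v v \<le> K * Q v" for v
  proof -
    obtain x where "\<forall>j\<in>J. x j \<in> U j" "v = (\<Sum>j\<in>J. x j)" "(\<Sum>j\<in>J. a (x j) (x j)) \<le> K * a v v"
      using stable by blast
    then show ?thesis
      unfolding Q_def using assms(1,3) a_proj(2)[OF U]
      by (intro energy_le_of_stable_decomposition[where x = x and U = U]) auto
  qed
  have "1 / K \<le> t \<and> t \<le> M" if "t \<in> eigvals (\<lambda>v. \<Sum>j\<in>J. a_proj a (U j) v)" for t
  proof -
    from that have "\<exists>v. v \<noteq> 0 \<and> (\<Sum>j\<in>J. a_proj a (U j) v) = t *\<^sub>R v"
      by (simp add: eigvals_def)
    then obtain v where "v \<noteq> 0" and eig: "(\<Sum>j\<in>J. a_proj a (U j) v) = t *\<^sub>R v"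
      by blast
    have "Q v = a (\<Sum>j\<in>J. a_proj a (U j) v) v"
      unfolding Q_def a_sum_left using a_proj_self[OF U] by simp
    then have "Q v = t * a v v" by (simp add: eig a_scale_left)
    with lower[of v] bounded[of v] a_pos[OF \<open>v \<noteq> 0\<close>] \<open>0 < K\<close> show ?thesis
      by (simp add: Q_def field_simps)
  qed
  moreover have "1 / K \<le> M"
  proof -
    obtain b :: 'v where "b \<noteq> 0" using nonzero_Basis SOME_Basis by blast
    have "a b b \<le> K * Q b" by (rule lower)
    also have "\<dots> \<le> K * (M * a b b)"
      using bounded[of b] \<open>0 < K\<close> unfolding Q_def by (intro mult_left_mono) auto
    finally have "a b b \<le> K * M * a b b" by (simp add: mult.assoc)
    then have "1 \<le> K * M" using a_pos[OF \<open>b \<noteq> 0\<close>] by simp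
    then show ?thesis using \<open>0 < K\<close> by (simp add: field_simps)
  qed
  ultimately have "kappa2 (\<lambda>v. \<Sum>j\<in>J. a_proj a (U j) v) \<le> M / (1 / K)"
    using \<open>0 < K\<close> by (intro kappa2_le_of_eigvals_bounds) auto
  then show ?thesis by simp
qed


lemma multilevel_decomposition:
  fixes V :: "nat \<Rightarrow> 'v set" and U :: "nat \<Rightarrow> nat \<Rightarrow> 'v set" and I :: "nat \<Rightarrow> nat set"
  assumes step: "\<And>l v. 1 \<le> l \<Longrightarrow> l \<le> L \<Longrightarrow> v \<in> V l \<Longrightarrow>
      \<exists>v' w. v' \<in> V (l - 1) \<and> (\<forall>i\<in>I l. w i \<in> U l i) \<and> v = v' + (\<Sum>i\<in>I l. w i)
        \<and> a v' v' \<le> C * a v v \<and> (\<Sum>i\<in>I l. a (w i) (w i)) \<le> D * a v v"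
    and "0 \<le> C" "0 \<le> D"
  shows "l \<le> L \<Longrightarrow> v \<in> V l \<Longrightarrow> \<exists>v0 w. v0 \<in> V 0
      \<and> (\<forall>k\<in>{1..l}. \<forall>i\<in>I k. w k i \<in> U k i)
      \<and> v = v0 + (\<Sum>k\<in>{1..l}. \<Sum>i\<in>I k. w k i)
      \<and> a v0 v0 + (\<Sum>k\<in>{1..l}. \<Sum>i\<in>I k. a (w k i) (w k i))
          \<le> (C ^ l + D * (\<Sum>k<l. C ^ k)) * a v v"
proof (induction l arbitrary: v)
  case 0
  then show ?case by auto
next
  case (Suc l)
  obtain v1 ws where v1: "v1 \<in> V l" and ws: "\<forall>i\<in>I (Suc l). ws i \<in> U (Suc l) i"
    and v_eq: "v = v1 + (\<Sum>i\<in>I (Suc l). ws i)" and v1_le: "a v1 v1 \<le> C * a v v"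
    and ws_le: "(\<Sum>i\<in>I (Suc l). a (ws i) (ws i)) \<le> D * a v v"
    using step[of "Suc l" v] Suc.prems by auto
  obtain v0 w where v0: "v0 \<in> V 0" and w: "\<forall>k\<in>{1..l}. \<forall>i\<in>I k. w k i \<in> U k i"
    and v1_eq: "v1 = v0 + (\<Sum>k\<in>{1..l}. \<Sum>i\<in>I k. w k i)"
    and w_le: "a v0 v0 + (\<Sum>k\<in>{1..l}. \<Sum>i\<in>I k. a (w k i) (w k i))
                 \<le> (C ^ l + D * (\<Sum>k<l. C ^ k)) * a v1 v1"
    using Suc.IH[OF _ v1] Suc.prems by auto
  define w' where "w' = w(Suc l := ws)"
  have w'_below: "(\<Sum>k\<in>{1..l}. g (w' k)) = (\<Sum>k\<in>{1..l}. g (w k))" for g :: "(nat \<Rightarrow> 'v) \<Rightarrow> 'b::comm_monoid_add"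
    by (rule sum.cong) (auto simp: w'_def)
  have "a v0 v0 + (\<Sum>k\<in>{1..Suc l}. \<Sum>i\<in>I k. a (w' k i) (w' k i))
      = (a v0 v0 + (\<Sum>k\<in>{1..l}. \<Sum>i\<in>I k. a (w k i) (w k i))) + (\<Sum>i\<in>I (Suc l). a (ws i) (ws i))"
    by (simp add: w'_def w'_below add.assoc)
  also have "\<dots> \<le> (C ^ l + D * (\<Sum>k<l. C ^ k)) * (C * a v v) + D * a v v"
    using w_le ws_le v1_le \<open>0 \<le> C\<close> \<open>0 \<le> D\<close>
    by (intro add_mono order_trans[OF w_le] mult_left_mono)
       (auto intro!: add_nonneg_nonneg mult_nonneg_nonneg sum_nonneg)
  also have "\<dots> = (C ^ Suc l + D * (\<Sum>k<Suc l. C ^ k)) * a v v"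
    by (simp add: sum.lessThan_Suc_shift sum_distrib_left algebra_simps del: sum.lessThan_Suc)
  finally show ?case
    using v0 w ws v_eq v1_eq
    by (intro exI[of _ v0] exI[of _ w'] conjI)
       (auto simp: w'_def w'_below[of "\<lambda>f. \<Sum>i\<in>I _. f i"] add.assoc)
qed

end


locale multilevel_splitting = spd_form a
  for a :: "'v::euclidean_space \<Rightarrow> 'v \<Rightarrow> real" +
  fixes L :: nat
    and V :: "nat \<Rightarrow> 'v set"
    and P :: "nat \<Rightarrow> nat"
    and Vs :: "nat \<Rightarrow> nat \<Rightarrow> 'v set"
    and r :: "nat \<Rightarrow> nat \<Rightarrow> 'v \<Rightarrow> 'w"
    and abar :: "nat \<Rightarrow> nat \<Rightarrow> 'w \<Rightarrow> 'w \<Rightarrow> real"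
    and a0 b0 C1 :: real
    and k0 :: nat
    and c :: "nat \<Rightarrow> nat \<Rightarrow> nat"
  assumes V0_sub: "subspace (V 0)"
    and V_top: "V L = UNIV"
    and Vs_sub: "\<And>l i. 1 \<le> l \<Longrightarrow> l \<le> L \<Longrightarrow> i \<in> {1..P l} \<Longrightarrow> subspace (Vs l i)"
    and a0_nonneg: "0 \<le> a0" and b0_nonneg: "0 \<le> b0" and C1_nonneg: "0 \<le> C1"
    and STIL: "\<And>l vs. 1 \<le> l \<Longrightarrow> l \<le> L \<Longrightarrow> (\<forall>i\<in>{1..P l}. vs i \<in> Vs l i) \<Longrightarrow>
                 a (\<Sum>i\<in>{1..P l}. vs i) (\<Sum>i\<in>{1..P l}. vs i)
                   \<le> a0 * (\<Sum>i\<in>{1..P l}. a (vs i) (vs i))"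
    and PSD_split: "\<And>l v. 1 \<le> l \<Longrightarrow> l \<le> L \<Longrightarrow> v \<in> V l \<Longrightarrow>
                 (\<Sum>i\<in>{1..P l}. abar l i (r l i v) (r l i v)) \<le> b0 * a v v"
    and loc_stab: "\<And>l v. 1 \<le> l \<Longrightarrow> l \<le> L \<Longrightarrow> v \<in> V l \<Longrightarrow>
                 \<exists>v0 vs. v0 \<in> V (l - 1) \<and> (\<forall>i\<in>{1..P l}. vs i \<in> Vs l i)
                   \<and> v = v0 + (\<Sum>i\<in>{1..P l}. vs i)
                   \<and> (\<forall>i\<in>{1..P l}. a (vs i) (vs i) \<le> C1 * abar l i (r l i v) (r l i v))"
    and coloring: "\<And>l. 1 \<le> l \<Longrightarrow> l \<le> L \<Longrightarrow>
                 (\<forall>i\<in>{1..P l}. c l i \<in> {1..k0}) \<and>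
                 (\<forall>i\<in>{1..P l}. \<forall>j\<in>{1..P l}. i \<noteq> j \<longrightarrow> c l i = c l j \<longrightarrow>
                    (\<forall>x\<in>Vs l i. \<forall>y\<in>Vs l j. a x y = 0))"
begin

lemma level_step:
  assumes "1 \<le> l" "l \<le> L" "v \<in> V l"
  shows "\<exists>v' w. v' \<in> V (l - 1) \<and> (\<forall>i\<in>{1..P l}. w i \<in> Vs l i) \<and> v = v' + (\<Sum>i\<in>{1..P l}. w i)
    \<and> a v' v' \<le> 2 * (1 + a0 * b0 * C1) * a v v \<and> (\<Sum>i\<in>{1..P l}. a (w i) (w i)) \<le> b0 * C1 * a v v"
proof -
  obtain v' w where v': "v' \<in> V (l - 1)" and w: "\<forall>i\<in>{1..P l}. w i \<in> Vs l i"
    and v_eq: "v = v' + (\<Sum>i\<in>{1..P l}. w i)"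
    and w_le: "\<forall>i\<in>{1..P l}. a (w i) (w i) \<le> C1 * abar l i (r l i v) (r l i v)"
    using loc_stab assms by blast
  define S where "S = (\<Sum>i\<in>{1..P l}. w i)"
  have "(\<Sum>i\<in>{1..P l}. a (w i) (w i)) \<le> C1 * (\<Sum>i\<in>{1..P l}. abar l i (r l i v) (r l i v))"
    unfolding sum_distrib_left using w_le by (intro sum_mono) auto
  also have "\<dots> \<le> C1 * (b0 * a v v)"
    using PSD_split assms C1_nonneg by (intro mult_left_mono) auto
  finally have energy: "(\<Sum>i\<in>{1..P l}. a (w i) (w i)) \<le> b0 * C1 * a v v"
    by (simp add: ac_simps)
  have "a S S \<le> a0 * (b0 * C1 * a v v)"
    unfolding S_def using STIL[OF assms(1,2) w] mult_left_mono[OF energy a0_nonneg] by linarith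
  moreover have "a v' v' \<le> 2 * a v v + 2 * a S S"
    using a_diff_le[of v S] v_eq by (simp add: S_def)
  ultimately have "a v' v' \<le> 2 * (1 + a0 * b0 * C1) * a v v"
    by (simp add: algebra_simps)
  with v' w v_eq energy show ?thesis by blast
qed

lemma kappa2_multilevel_le:
  "kappa2 (\<lambda>v. a_proj a (V 0) v + (\<Sum>l\<in>{1..L}. \<Sum>i\<in>{1..P l}. a_proj a (Vs l i) v))
     \<le> (2 * (1 + a0 * b0 * C1)) ^ L * (1 + b0 * C1 / (2 * (1 + a0 * b0 * C1) - 1))
        * (1 + real k0 * real L)"
proof -
  define C where "C = 2 * (1 + a0 * b0 * C1)"
  define K where "K = C ^ L + b0 * C1 * (\<Sum>k<L. C ^ k)"
  define J where "J = insert (0, 0) (SIGMA l:{1..L}. {1..P l})"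
  define U where "U j = (if fst j = 0 then V 0 else Vs (fst j) (snd j))" for j :: "nat \<times> nat"
  have "0 \<le> b0 * C1" "0 \<le> a0 * (b0 * C1)"
    using a0_nonneg b0_nonneg C1_nonneg by simp_all
  then have "1 < C" by (simp add: C_def ac_simps)
  have "kappa2 (\<lambda>v. \<Sum>j\<in>J. a_proj a (U j) v) \<le> (1 + real k0 * real L) * K"
  proof (rule kappa2_additive_schwarz_le)
    show "finite J" "\<And>j. j \<in> J \<Longrightarrow> subspace (U j)"
      using V0_sub Vs_sub by (auto simp: J_def U_def)
    show "0 < K"
      using \<open>1 < C\<close> \<open>0 \<le> b0 * C1\<close> by (simp add: K_def add_pos_nonneg sum_nonneg)
    show "\<exists>x. (\<forall>j\<in>J. x j \<in> U j) \<and> v = (\<Sum>j\<in>J. x j) \<and> (\<Sum>j\<in>J. a (x j) (x j)) \<le> K * a v v" for v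
    proof -
      obtain v0 w where "v0 \<in> V 0" "\<forall>l\<in>{1..L}. \<forall>i\<in>{1..P l}. w l i \<in> Vs l i"
        "v = v0 + (\<Sum>l\<in>{1..L}. \<Sum>i\<in>{1..P l}. w l i)"
        "a v0 v0 + (\<Sum>l\<in>{1..L}. \<Sum>i\<in>{1..P l}. a (w l i) (w l i)) \<le> K * a v v"
        using multilevel_decomposition[of L V "\<lambda>l. {1..P l}" Vs C "b0 * C1", OF level_step[folded C_def]]
          \<open>1 < C\<close> \<open>0 \<le> b0 * C1\<close> V_top unfolding C_def K_def by fastforce
      then show ?thesis
        by (intro exI[of _ "\<lambda>j. if fst j = 0 then v0 else w (fst j) (snd j)"])
           (unfold J_def sum_insert_Sigma, auto simp: U_def)
    qed
    show "(\<Sum>j\<in>J. a (a_proj a (U j) v) (a_proj a (U j) v)) \<le> (1 + real k0 * real L) * a v v" for v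
    proof -
      have "a (a_proj a (V 0) v) (a_proj a (V 0) v) \<le> a v v"
        using sum_a_orthogonal_le[of "{()}" "\<lambda>_. a_proj a (V 0) v" v] a_proj_self[OF V0_sub] by simp
      moreover have "(\<Sum>i\<in>{1..P l}. a (a_proj a (Vs l i) v) (a_proj a (Vs l i) v)) \<le> real k0 * a v v"
        if "l \<in> {1..L}" for l
        using that coloring[of l] a_proj(1)[OF Vs_sub] a_proj_self[OF Vs_sub]
        by (intro sum_a_colored_le[where c = "c l"]) auto
      then have "(\<Sum>l\<in>{1..L}. \<Sum>i\<in>{1..P l}. a (a_proj a (Vs l i) v) (a_proj a (Vs l i) v))
          \<le> (\<Sum>l\<in>{1..L}. real k0 * a v v)"
        by (rule sum_mono)
      ultimately show ?thesis
        unfolding J_def U_def sum_insert_Sigma by (simp add: algebra_simps)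
    qed
  qed
  also have "\<dots> \<le> (1 + real k0 * real L) * (C ^ L * (1 + b0 * C1 / (C - 1)))"
    unfolding K_def using geometric_bound_le[OF \<open>1 < C\<close> \<open>0 \<le> b0 * C1\<close>]
    by (intro mult_left_mono) auto
  finally show ?thesis
    unfolding J_def U_def sum_insert_Sigma C_def by (simp add: ac_simps)
qed

end


theorem theorem3p11:
  fixes a :: "'v::euclidean_space \<Rightarrow> 'v \<Rightarrow> real"
    and L :: nat
    and V :: "nat \<Rightarrow> 'v set"
    and P :: "nat \<Rightarrow> nat"
    and Vs :: "nat \<Rightarrow> nat \<Rightarrow> 'v set"
    and r :: "nat \<Rightarrow> nat \<Rightarrow> 'v \<Rightarrow> 'w::euclidean_space"
    and abar :: "nat \<Rightarrow> nat \<Rightarrow> 'w \<Rightarrow> 'w \<Rightarrow> real"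
    and a0 b0 C1 :: real
    and k0 :: nat
    and c :: "nat \<Rightarrow> nat \<Rightarrow> nat"
  assumes a_bil: "bilinear a"
    and a_sym: "\<And>u v. a u v = a v u"
    and a_pos: "\<And>v. v \<noteq> 0 \<Longrightarrow> a v v > 0"
    and L_ge: "L \<ge> 1"
    and V_sub: "\<And>l. l \<le> L \<Longrightarrow> subspace (V l)"
    and V_nested: "\<And>l. l < L \<Longrightarrow> V l \<subseteq> V (Suc l)"
    and V_top: "V L = UNIV"
    and P_pos: "\<And>l. 1 \<le> l \<Longrightarrow> l \<le> L \<Longrightarrow> P l \<ge> 1"
    and Vs_sub: "\<And>l i. 1 \<le> l \<Longrightarrow> l \<le> L \<Longrightarrow> i \<in> {1..P l} \<Longrightarrow>
                   subspace (Vs l i) \<and> Vs l i \<subseteq> V l"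
    and r_lin: "\<And>l i x y t. 1 \<le> l \<Longrightarrow> l \<le> L \<Longrightarrow> i \<in> {1..P l} \<Longrightarrow>
                   x \<in> V l \<Longrightarrow> y \<in> V l \<Longrightarrow>
                   r l i (x + y) = r l i x + r l i y \<and> r l i (t *\<^sub>R x) = t *\<^sub>R r l i x"
    and abar_bil: "\<And>l i. 1 \<le> l \<Longrightarrow> l \<le> L \<Longrightarrow> i \<in> {1..P l} \<Longrightarrow> bilinear (abar l i)"
    and abar_sym: "\<And>l i x y. 1 \<le> l \<Longrightarrow> l \<le> L \<Longrightarrow> i \<in> {1..P l} \<Longrightarrow>
                   abar l i x y = abar l i y x"
    and abar_psd: "\<And>l i x. 1 \<le> l \<Longrightarrow> l \<le> L \<Longrightarrow> i \<in> {1..P l} \<Longrightarrow> abar l i x x \<ge> 0"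
    and a0_pos: "a0 > 0" and b0_pos: "b0 > 0" and C1_pos: "C1 > 0"
    and STIL: "\<And>l vs. 1 \<le> l \<Longrightarrow> l \<le> L \<Longrightarrow> (\<forall>i\<in>{1..P l}. vs i \<in> Vs l i) \<Longrightarrow>
                 a (\<Sum>i\<in>{1..P l}. vs i) (\<Sum>i\<in>{1..P l}. vs i)
                   \<le> a0 * (\<Sum>i\<in>{1..P l}. a (vs i) (vs i))"
    and PSD_split: "\<And>l v. 1 \<le> l \<Longrightarrow> l \<le> L \<Longrightarrow> v \<in> V l \<Longrightarrow>
                 (\<Sum>i\<in>{1..P l}. abar l i (r l i v) (r l i v)) \<le> b0 * a v v"
    and loc_stab: "\<And>l v. 1 \<le> l \<Longrightarrow> l \<le> L \<Longrightarrow> v \<in> V l \<Longrightarrow>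
                 \<exists>v0 vs. v0 \<in> V (l - 1) \<and> (\<forall>i\<in>{1..P l}. vs i \<in> Vs l i)
                   \<and> v = v0 + (\<Sum>i\<in>{1..P l}. vs i)
                   \<and> (\<forall>i\<in>{1..P l}. a (vs i) (vs i) \<le> C1 * abar l i (r l i v) (r l i v))"
    and coloring: "\<And>l. 1 \<le> l \<Longrightarrow> l \<le> L \<Longrightarrow>
                 (\<forall>i\<in>{1..P l}. c l i \<in> {1..k0}) \<and>
                 (\<forall>i\<in>{1..P l}. \<forall>j\<in>{1..P l}. i \<noteq> j \<longrightarrow> c l i = c l j \<longrightarrow>
                    (\<forall>x\<in>Vs l i. \<forall>y\<in>Vs l j. a x y = 0))"
  shows "kappa2 (\<lambda>v. a_proj a (V 0) v
                   + (\<Sum>l\<in>{1..L}. \<Sum>i\<in>{1..P l}. a_proj a (Vs l i) v))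
         \<le> (2 * (1 + a0 * b0 * C1)) ^ L
            * (1 + b0 * C1 / (2 * (1 + a0 * b0 * C1) - 1))
            * (1 + real k0 * real L)"
proof -
  interpret multilevel_splitting a L V P Vs r abar a0 b0 C1 k0 c
    using a_bil a_sym a_pos V_sub[of 0] V_top Vs_sub a0_pos b0_pos C1_pos
      STIL PSD_split loc_stab coloring
    by unfold_locales auto
  show ?thesis by (rule kappa2_multilevel_le)
qed

end
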